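(* Let $f,g\colon X\to Y$ be continuous maps and let $u_0,\dots,u_k\in\mathcal{J}(f,g)$ be cohomology classes with $u_0\smile\cdots\smile u_k\neq 0$. Then $\mathrm{D}(f,g)\geq \sum_{j=0}^k \mathrm{hw}_{f,g}(u_j)$.
   Context: $R$ is a commutative ring with unit and $H^*(-;R)$ is cohomology with coefficients in $R$; $\mathcal{J}(f,g)\subset H^*(X;R)$ is the image of $f^*-g^*\colon H^*(Y;R)\to H^*(X;R)$. For continuous maps $f,g\colon X\to Y$, the homotopic distance $\mathrm{D}(f,g)$ is the least integer $n\geq 0$ such that there is an open cover $\{U_0,\dots,U_n\}$ of $X$ with $f|_{U_j}\simeq g|_{U_j}$ for all $j$ ($\infty$ if none exists). Homotopy weight: for $u\in H^*(X;R)$, $\mathrm{hw}_{f,g}(u)=k+1$ where $k$ is the greatest integer such that for every topological space $A$ and every continuous map $\phi\colon A\to X$ with $\mathrm{D}(f\circ\phi,g\circ\phi)\leq k$ one has $\phi^*u=0\in H^*(A;R)$; and $\mathrm{hw}_{f,g}(0)=\infty$. *)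

theory Defs
  imports "HOL-Homology.Homology" "HOL-Library.Extended_Nat"
begin

type_synonym ('a, 'r) cochain = "((nat \<Rightarrow> real) \<Rightarrow> 'a) \<Rightarrow> 'r"

definition cochain :: "nat \<Rightarrow> 'a topology \<Rightarrow> ('a, 'r::comm_ring_1) cochain \<Rightarrow> bool" where
  "cochain n X c \<equiv> (\<forall>\<sigma>. \<not> singular_simplex n X \<sigma> \<longrightarrow> c \<sigma> = 0)"

definition coboundary :: "nat \<Rightarrow> 'a topology \<Rightarrow> ('a, 'r::comm_ring_1) cochain \<Rightarrow> ('a, 'r) cochain" where
  "coboundary n X c \<equiv> (\<lambda>\<sigma>. if singular_simplex (Suc n) X \<sigma>
      then (\<Sum>i\<le>Suc n. (-1) ^ i * c (singular_face (Suc n) i \<sigma>)) else 0)"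

definition cocycle :: "nat \<Rightarrow> 'a topology \<Rightarrow> ('a, 'r::comm_ring_1) cochain \<Rightarrow> bool" where
  "cocycle n X c \<equiv> cochain n X c \<and> coboundary n X c = (\<lambda>_. 0)"

definition is_coboundary :: "nat \<Rightarrow> 'a topology \<Rightarrow> ('a, 'r::comm_ring_1) cochain \<Rightarrow> bool" where
  "is_coboundary n X c \<equiv> (n = 0 \<and> c = (\<lambda>_. 0)) \<or>
      (\<exists>m b. n = Suc m \<and> cochain m X b \<and> c = coboundary m X b)"

text \<open>Elements of the total cohomology H^*(X;R) are represented by graded cocycles
  (finitely many nonzero homogeneous components); two representatives give the
  same class iff each homogeneous difference is a coboundary.\<close>

definition gcocycle :: "'a topology \<Rightarrow> (nat \<Rightarrow> ('a, 'r::comm_ring_1) cochain) \<Rightarrow> bool" where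
  "gcocycle X u \<equiv> (\<forall>n. cocycle n X (u n)) \<and> finite {n. u n \<noteq> (\<lambda>_. 0)}"

definition cohomologous :: "'a topology \<Rightarrow> (nat \<Rightarrow> ('a, 'r::comm_ring_1) cochain)
    \<Rightarrow> (nat \<Rightarrow> ('a, 'r) cochain) \<Rightarrow> bool" where
  "cohomologous X u v \<equiv> (\<forall>n. is_coboundary n X (\<lambda>\<sigma>. u n \<sigma> - v n \<sigma>))"

definition gzero :: "nat \<Rightarrow> ('a, 'r::comm_ring_1) cochain" where
  "gzero \<equiv> (\<lambda>n \<sigma>. 0)"

definition pullback :: "nat \<Rightarrow> 'b topology \<Rightarrow> ('b \<Rightarrow> 'a) \<Rightarrow> ('a, 'r::comm_ring_1) cochain \<Rightarrow> ('b, 'r) cochain" where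
  "pullback n A \<phi> c \<equiv> (\<lambda>\<sigma>. if singular_simplex n A \<sigma> then c (simplex_map n \<phi> \<sigma>) else 0)"

definition gpullback :: "'b topology \<Rightarrow> ('b \<Rightarrow> 'a) \<Rightarrow> (nat \<Rightarrow> ('a, 'r::comm_ring_1) cochain) \<Rightarrow> nat \<Rightarrow> ('b, 'r) cochain" where
  "gpullback A \<phi> u \<equiv> (\<lambda>n. pullback n A \<phi> (u n))"

text \<open>Front p-face and back q-face of a (p+q)-simplex (Alexander--Whitney).\<close>
definition front_face :: "nat \<Rightarrow> ((nat \<Rightarrow> real) \<Rightarrow> 'a) \<Rightarrow> (nat \<Rightarrow> real) \<Rightarrow> 'a" where
  "front_face p \<sigma> \<equiv> restrict \<sigma> (standard_simplex p)"

definition back_face :: "nat \<Rightarrow> nat \<Rightarrow> ((nat \<Rightarrow> real) \<Rightarrow> 'a) \<Rightarrow> (nat \<Rightarrow> real) \<Rightarrow> 'a" where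
  "back_face p q \<sigma> \<equiv> restrict (\<sigma> \<circ> (\<lambda>x i. if i < p then 0 else x (i - p))) (standard_simplex q)"

definition cup_cochain :: "'a topology \<Rightarrow> nat \<Rightarrow> nat \<Rightarrow> ('a, 'r::comm_ring_1) cochain
    \<Rightarrow> ('a, 'r) cochain \<Rightarrow> ('a, 'r) cochain" where
  "cup_cochain X p q a b \<equiv> (\<lambda>\<sigma>. if singular_simplex (p + q) X \<sigma>
      then a (front_face p \<sigma>) * b (back_face p q \<sigma>) else 0)"

definition gcup :: "'a topology \<Rightarrow> (nat \<Rightarrow> ('a, 'r::comm_ring_1) cochain)
    \<Rightarrow> (nat \<Rightarrow> ('a, 'r) cochain) \<Rightarrow> nat \<Rightarrow> ('a, 'r) cochain" where
  "gcup X u v \<equiv> (\<lambda>n \<sigma>. \<Sum>p\<le>n. cup_cochain X p (n - p) (u p) (v (n - p)) \<sigma>)"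

fun cupprod :: "'a topology \<Rightarrow> (nat \<Rightarrow> nat \<Rightarrow> ('a, 'r::comm_ring_1) cochain) \<Rightarrow> nat \<Rightarrow> nat \<Rightarrow> ('a, 'r) cochain" where
  "cupprod X u 0 = u 0"
| "cupprod X u (Suc k) = gcup X (cupprod X u k) (u (Suc k))"

definition in_J :: "'a topology \<Rightarrow> 'b topology \<Rightarrow> ('a \<Rightarrow> 'b) \<Rightarrow> ('a \<Rightarrow> 'b)
    \<Rightarrow> (nat \<Rightarrow> ('a, 'r::comm_ring_1) cochain) \<Rightarrow> bool" where
  "in_J X Y f g u \<equiv> gcocycle X u \<and> (\<exists>y. gcocycle Y y \<and>
      cohomologous X u (\<lambda>n \<sigma>. gpullback X f y n \<sigma> - gpullback X g y n \<sigma>))"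

definition hdist :: "'a topology \<Rightarrow> 'b topology \<Rightarrow> ('a \<Rightarrow> 'b) \<Rightarrow> ('a \<Rightarrow> 'b) \<Rightarrow> enat" where
  "hdist X Y f g \<equiv>
    (let P = (\<lambda>n. \<exists>U :: nat \<Rightarrow> 'a set. (\<forall>j\<le>n. openin X (U j)) \<and> (\<Union>j\<le>n. U j) = topspace X
                \<and> (\<forall>j\<le>n. homotopic_with (\<lambda>h. True) (subtopology X (U j)) Y f g))
     in if (\<exists>n. P n) then enat (LEAST n. P n) else \<infinity>)"

text \<open>Homotopy weight hw_{f,g}(u); the test spaces A range over topologies on the
  carrier type of X.\<close>
definition hw :: "'a topology \<Rightarrow> 'b topology \<Rightarrow> ('a \<Rightarrow> 'b) \<Rightarrow> ('a \<Rightarrow> 'b)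
    \<Rightarrow> (nat \<Rightarrow> ('a, 'r::comm_ring_1) cochain) \<Rightarrow> enat" where
  "hw X Y f g u \<equiv>
    (if cohomologous X u gzero then \<infinity>
     else Sup ({0} \<union> {enat (Suc k) | k. \<forall>(A :: 'a topology) \<phi>. continuous_map A X \<phi> \<and>
              hdist A Y (f \<circ> \<phi>) (g \<circ> \<phi>) \<le> enat k \<longrightarrow> cohomologous A (gpullback A \<phi> u) gzero}))"

end

theory Submission
  imports Defs
begin

(* Let D(f,g) = n and cover X by open sets U_0, ..., U_n with f and g homotopic on each.
   If the weights added up to more than n, the U_i could be grouped into k + 1 consecutive
   blocks, the j-th one consisting of at most hw(u_j) sets.  On the union V_j of the j-th block
   D(f,g) < hw(u_j), so u_j restricts to zero on V_j and is therefore represented by a cocycle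
   vanishing on all simplices in V_j.  The cup product of these representatives vanishes on every
   simplex that is small with respect to the open cover V_0, ..., V_k; by iterated barycentric
   subdivision such a cocycle is a coboundary, contradicting u_0 \<smile> ... \<smile> u_k \<noteq> 0. *)

section \<open>Cochains and the coboundary operator\<close>

definition eval_cochain :: "('a, 'r::comm_ring_1) cochain \<Rightarrow> 'a chain \<Rightarrow> 'r" where
  "eval_cochain c x = (\<Sum>\<sigma>\<in>Poly_Mapping.keys x. of_int (poly_mapping.lookup x \<sigma>) * c \<sigma>)"

lemma eval_cochain_superset:
  assumes "finite S" "Poly_Mapping.keys x \<subseteq> S"
  shows "eval_cochain c x = (\<Sum>\<sigma>\<in>S. of_int (poly_mapping.lookup x \<sigma>) * c \<sigma>)"
  unfolding eval_cochain_def
  by (rule sum.mono_neutral_left) (use assms in \<open>auto simp: in_keys_iff\<close>)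

lemma eval_cochain_add: "eval_cochain c (a + b) = eval_cochain c a + eval_cochain c b"
proof -
  let ?S = "Poly_Mapping.keys a \<union> Poly_Mapping.keys b"
  have "Poly_Mapping.keys (a + b) \<subseteq> ?S"
    using keys_add[of a b] by blast
  then show ?thesis
    by (simp add: eval_cochain_superset[of ?S] lookup_add distrib_right sum.distrib)
qed

lemma eval_cochain_diff: "eval_cochain c (a - b) = eval_cochain c a - eval_cochain c b"
proof -
  let ?S = "Poly_Mapping.keys a \<union> Poly_Mapping.keys b"
  have "Poly_Mapping.keys (a - b) \<subseteq> ?S"
    using keys_diff[of a b] by blast
  then show ?thesis
    by (simp add: eval_cochain_superset[of ?S] lookup_minus left_diff_distrib sum_subtractf)
qed

lemma eval_cochain_0 [simp]: "eval_cochain c 0 = 0"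
  by (simp add: eval_cochain_def)

lemma eval_cochain_frag_of [simp]: "eval_cochain c (frag_of \<sigma>) = c \<sigma>"
  by (simp add: eval_cochain_def)

lemma eval_cochain_cmul [simp]: "eval_cochain c (frag_cmul k x) = of_int k * eval_cochain c x"
  by (simp add: eval_cochain_superset[of "Poly_Mapping.keys x"] keys_cmul)
     (simp add: eval_cochain_def sum_distrib_left mult.assoc)

lemma eval_cochain_sum: "eval_cochain c (\<Sum>i\<in>I. x i) = (\<Sum>i\<in>I. eval_cochain c (x i))"
  by (induction I rule: infinite_finite_induct) (auto simp: eval_cochain_add)

lemma eval_cochain_eq_0:
  "(\<And>\<sigma>. \<sigma> \<in> Poly_Mapping.keys x \<Longrightarrow> c \<sigma> = 0) \<Longrightarrow> eval_cochain c x = 0"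
  by (simp add: eval_cochain_def)

lemma coboundary_eq_eval_boundary:
  assumes "singular_simplex (Suc n) X \<sigma>"
  shows "coboundary n X c \<sigma> = eval_cochain c (chain_boundary (Suc n) (frag_of \<sigma>))"
proof -
  have "eval_cochain c (chain_boundary (Suc n) (frag_of \<sigma>))
      = (\<Sum>i\<le>Suc n. (-1) ^ i * c (singular_face (Suc n) i \<sigma>))"
    unfolding chain_boundary_def
    by (simp only: frag_extend_of eval_cochain_sum eval_cochain_cmul eval_cochain_frag_of
        if_False nat.distinct) simp
  then show ?thesis
    using assms by (simp add: coboundary_def)
qed

lemma eval_coboundary:
  assumes "singular_chain (Suc n) X d"
  shows "eval_cochain (coboundary n X c) d = eval_cochain c (chain_boundary (Suc n) d)"
  using assms unfolding singular_chain_def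
  by (induction rule: frag_induction)
     (simp_all add: coboundary_eq_eval_boundary eval_cochain_diff chain_boundary_diff)

lemma eval_cocycle_boundary:
  assumes "cocycle n X z" "singular_chain (Suc n) X d"
  shows "eval_cochain z (chain_boundary (Suc n) d) = 0"
  using eval_coboundary[OF assms(2), of z] assms(1) by (simp add: cocycle_def eval_cochain_def)

lemma coboundary_coboundary: "coboundary (Suc n) X (coboundary n X c) = (\<lambda>_. 0)"
proof
  fix \<sigma>
  show "coboundary (Suc n) X (coboundary n X c) \<sigma> = 0"
  proof (cases "singular_simplex (Suc (Suc n)) X \<sigma>")
    case True
    then have "singular_chain (Suc n) X (chain_boundary (Suc (Suc n)) (frag_of \<sigma>))"
      by (simp add: singular_chain_boundary_alt singular_chain_of)
    with True show ?thesis
      by (simp add: coboundary_eq_eval_boundary eval_coboundary chain_boundary_boundary_alt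
          singular_chain_of)
  qed (simp add: coboundary_def)
qed

lemma coboundary_diff:
  "coboundary n X (\<lambda>\<sigma>. a \<sigma> - b \<sigma>) = (\<lambda>\<sigma>. coboundary n X a \<sigma> - coboundary n X b \<sigma>)"
  by (auto simp: coboundary_def algebra_simps sum_subtractf)

lemma coboundary_cmul: "coboundary n X (\<lambda>\<sigma>. r * c \<sigma>) = (\<lambda>\<sigma>. r * coboundary n X c \<sigma>)"
  by (auto simp: coboundary_def sum_distrib_left algebra_simps)

lemma coboundary_add:
  "coboundary n X (\<lambda>\<sigma>. a \<sigma> + b \<sigma>) = (\<lambda>\<sigma>. coboundary n X a \<sigma> + coboundary n X b \<sigma>)"
  by (auto simp: coboundary_def algebra_simps sum.distrib)

lemma coboundary_sum:
  "coboundary n X (\<lambda>\<sigma>. \<Sum>i\<in>I. c i \<sigma>) = (\<lambda>\<sigma>. \<Sum>i\<in>I. coboundary n X (c i) \<sigma>)"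
proof
  fix \<sigma>
  show "coboundary n X (\<lambda>\<sigma>. \<Sum>i\<in>I. c i \<sigma>) \<sigma> = (\<Sum>i\<in>I. coboundary n X (c i) \<sigma>)"
  proof (cases "singular_simplex (Suc n) X \<sigma>")
    case True
    then show ?thesis
      unfolding coboundary_def by (simp only: if_True sum_distrib_left) (rule sum.swap)
  qed (simp add: coboundary_def)
qed

lemma coboundary_zero [simp]: "coboundary n X (\<lambda>_. 0) = (\<lambda>_. 0)"
  by (auto simp: coboundary_def)

lemma coboundary_subtopology:
  assumes "singular_simplex (Suc m) (subtopology X V) \<sigma>"
  shows "coboundary m (subtopology X V) b \<sigma> = coboundary m X b \<sigma>"
  using assms by (simp add: coboundary_def singular_simplex_subtopology)

lemma cochain_subtopology: "cochain m (subtopology X V) b \<Longrightarrow> cochain m X b"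
  by (auto simp: cochain_def singular_simplex_subtopology)

lemma pullback_coboundary:
  assumes "continuous_map A X \<phi>"
  shows "pullback (Suc m) A \<phi> (coboundary m X b) = coboundary m A (pullback m A \<phi> b)"
proof
  fix \<sigma>
  show "pullback (Suc m) A \<phi> (coboundary m X b) \<sigma> = coboundary m A (pullback m A \<phi> b) \<sigma>"
  proof (cases "singular_simplex (Suc m) A \<sigma>")
    case True
    have "singular_simplex (Suc m) X (simplex_map (Suc m) \<phi> \<sigma>)"
      using True assms by (rule singular_simplex_simplex_map)
    moreover have "singular_face (Suc m) i (simplex_map (Suc m) \<phi> \<sigma>)
                 = simplex_map m \<phi> (singular_face (Suc m) i \<sigma>)" if "i \<le> Suc m" for i
      using that by (simp add: singular_face_simplex_map) (auto simp: simplex_map_def singular_face_def fun_eq_iff)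
    moreover have "singular_simplex m A (singular_face (Suc m) i \<sigma>)" if "i \<le> Suc m" for i
      using singular_simplex_singular_face[OF True _ that] by simp
    ultimately show ?thesis
      using True by (simp add: pullback_def coboundary_def)
  qed (simp add: pullback_def coboundary_def)
qed

lemma is_coboundary_SucI: "cochain m X b \<Longrightarrow> c = coboundary m X b \<Longrightarrow> is_coboundary (Suc m) X c"
  by (auto simp: is_coboundary_def)

lemma is_coboundary_SucE:
  assumes "is_coboundary (Suc m) X c"
  obtains b where "cochain m X b" "c = coboundary m X b"
  using assms by (auto simp: is_coboundary_def)

lemma is_coboundary_0D: "is_coboundary 0 X c \<Longrightarrow> c = (\<lambda>_. 0)"
  by (auto simp: is_coboundary_def)

lemma is_coboundary_zero [simp]: "is_coboundary n X (\<lambda>_. 0)"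
  by (cases n) (auto simp: is_coboundary_def cochain_def intro!: exI[of _ "\<lambda>_. 0"])

lemma is_coboundary_imp_cocycle:
  assumes "is_coboundary n X c"
  shows "cocycle n X c"
proof (cases n)
  case 0
  then show ?thesis using assms by (auto simp: cocycle_def cochain_def dest!: is_coboundary_0D)
next
  case (Suc m)
  then obtain b where "c = coboundary m X b"
    using assms by (metis is_coboundary_SucE)
  then show ?thesis
    using Suc by (simp add: cocycle_def coboundary_coboundary) (simp add: cochain_def coboundary_def)
qed

lemma is_coboundary_add:
  assumes "is_coboundary n X a" "is_coboundary n X b"
  shows "is_coboundary n X (\<lambda>\<sigma>. a \<sigma> + b \<sigma>)"
proof (cases n)
  case 0
  then show ?thesis using assms by (auto dest!: is_coboundary_0D)
next
  case (Suc m)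
  obtain a' b' where "cochain m X a'" "a = coboundary m X a'" "cochain m X b'" "b = coboundary m X b'"
    using assms Suc by (metis is_coboundary_SucE)
  moreover have "cochain m X (\<lambda>\<sigma>. a' \<sigma> + b' \<sigma>)"
    using \<open>cochain m X a'\<close> \<open>cochain m X b'\<close> by (simp add: cochain_def)
  ultimately show ?thesis
    using Suc by (auto intro: is_coboundary_SucI simp: coboundary_add)
qed

lemma is_coboundary_sum:
  "finite I \<Longrightarrow> (\<And>i. i \<in> I \<Longrightarrow> is_coboundary n X (c i))
   \<Longrightarrow> is_coboundary n X (\<lambda>\<sigma>. \<Sum>i\<in>I. c i \<sigma>)"
  by (induction I rule: finite_induct) (auto intro: is_coboundary_add)

lemma is_coboundary_pullback:
  assumes "is_coboundary n X c" "continuous_map A X \<phi>"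
  shows "is_coboundary n A (pullback n A \<phi> c)"
proof (cases n)
  case 0
  then show ?thesis using assms by (auto simp: pullback_def dest!: is_coboundary_0D)
next
  case (Suc m)
  then obtain b where "c = coboundary m X b"
    using assms(1) by (metis is_coboundary_SucE)
  moreover have "cochain m A (pullback m A \<phi> b)"
    by (simp add: cochain_def pullback_def)
  ultimately show ?thesis
    using Suc assms(2) by (auto intro: is_coboundary_SucI simp: pullback_coboundary)
qed

lemma cocycle_sum:
  "(\<And>i. i \<in> I \<Longrightarrow> cocycle n X (c i)) \<Longrightarrow> cocycle n X (\<lambda>\<sigma>. \<Sum>i\<in>I. c i \<sigma>)"
  by (auto simp: cocycle_def cochain_def coboundary_sum fun_eq_iff)

lemma cocycle_diff:
  "cocycle n X a \<Longrightarrow> cocycle n X b \<Longrightarrow> cocycle n X (\<lambda>\<sigma>. a \<sigma> - b \<sigma>)"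
  by (auto simp: cocycle_def cochain_def coboundary_diff fun_eq_iff)

section \<open>The cup product of cochains\<close>

definition back_inclusion :: "nat \<Rightarrow> (nat \<Rightarrow> real) \<Rightarrow> nat \<Rightarrow> real" where
  "back_inclusion p x = (\<lambda>i. if i < p then 0 else x (i - p))"

lemma back_face_eq: "back_face p q \<sigma> = restrict (\<sigma> \<circ> back_inclusion p) (standard_simplex q)"
  unfolding back_face_def back_inclusion_def[abs_def] by simp

lemma back_inclusion_in_standard_simplex:
  assumes "x \<in> standard_simplex q"
  shows "back_inclusion p x \<in> standard_simplex (p + q)"
proof -
  have "(\<Sum>i\<le>p + q. back_inclusion p x i) = (\<Sum>i\<in>{p..p + q}. back_inclusion p x i)"
    by (rule sum.mono_neutral_right) (auto simp: back_inclusion_def)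
  also have "\<dots> = (\<Sum>i\<in>{0 + p..q + p}. x (i - p))"
    by (rule sum.cong) (auto simp: back_inclusion_def)
  also have "\<dots> = (\<Sum>i\<le>q. x i)"
    by (simp only: sum.shift_bounds_cl_nat_ivl) (simp add: atLeast0AtMost)
  finally show ?thesis
    using assms by (auto simp: standard_simplex_def back_inclusion_def)
qed

lemma continuous_map_back_inclusion:
  "continuous_map (subtopology (powertop_real UNIV) (standard_simplex q))
                  (subtopology (powertop_real UNIV) (standard_simplex (p + q))) (back_inclusion p)"
proof (clarsimp simp add: continuous_map_in_subtopology back_inclusion_in_standard_simplex
    continuous_map_componentwise image_subset_iff)
  fix i
  have "continuous_map (powertop_real UNIV) euclideanreal (\<lambda>x. if i < p then 0 else x (i - p))"
    by (auto intro: continuous_map_product_projection)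
  then show "continuous_map (subtopology (powertop_real UNIV) (standard_simplex q)) euclideanreal
      (\<lambda>x. back_inclusion p x i)"
    by (simp add: back_inclusion_def continuous_map_from_subtopology)
qed

lemma singular_simplex_front_face:
  assumes "singular_simplex (p + q) X \<sigma>"
  shows "singular_simplex p X (front_face p \<sigma>)"
proof -
  have "continuous_map (subtopology (powertop_real UNIV) (standard_simplex p)) X \<sigma>"
    using assms unfolding singular_simplex_def
    by (rule continuous_map_from_subtopology_mono[OF conjunct1]) (simp add: standard_simplex_mono)
  then show ?thesis
    by (simp add: singular_simplex_def front_face_def continuous_map_eq[where f = \<sigma>])
qed

lemma singular_simplex_back_face:
  assumes "singular_simplex (p + q) X \<sigma>"
  shows "singular_simplex q X (back_face p q \<sigma>)"
proof -
  have "continuous_map (subtopology (powertop_real UNIV) (standard_simplex q)) X (\<sigma> \<circ> back_inclusion p)"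
    by (rule continuous_map_compose[OF continuous_map_back_inclusion])
       (use assms in \<open>simp add: singular_simplex_def\<close>)
  then show ?thesis
    by (simp add: singular_simplex_def back_face_eq continuous_map_eq[where f = "\<sigma> \<circ> back_inclusion p"])
qed

lemma front_face_singular_face_le:
  assumes "i \<le> Suc p"
  shows "front_face p (singular_face (Suc (p + q)) i \<sigma>) = singular_face (Suc p) i (front_face (Suc p) \<sigma>)"
proof
  fix x
  show "front_face p (singular_face (Suc (p + q)) i \<sigma>) x = singular_face (Suc p) i (front_face (Suc p) \<sigma>) x"
  proof (cases "x \<in> standard_simplex p")
    case True
    have "x \<in> standard_simplex (p + q)"
      using True standard_simplex_mono[of p "p + q"] by auto
    moreover have "simplical_face i x \<in> standard_simplex (Suc p)"
      using simplical_face_in_standard_simplex[of "Suc p" i x] True assms by simp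
    ultimately show ?thesis
      using True by (simp add: front_face_def singular_face_def)
  qed (simp add: front_face_def singular_face_def)
qed

lemma front_face_singular_face_gt:
  assumes "p < i"
  shows "front_face p (singular_face (Suc (p + q)) i \<sigma>) = front_face p \<sigma>"
proof
  fix x
  show "front_face p (singular_face (Suc (p + q)) i \<sigma>) x = front_face p \<sigma> x"
  proof (cases "x \<in> standard_simplex p")
    case True
    have "x \<in> standard_simplex (p + q)"
      using True standard_simplex_mono[of p "p + q"] by auto
    moreover have "simplical_face i x = x"
      using True assms by (auto simp: simplical_face_def standard_simplex_def)
    ultimately show ?thesis
      using True by (simp add: front_face_def singular_face_def)
  qed (simp add: front_face_def singular_face_def)
qed

lemma back_face_singular_face_le:
  assumes "i \<le> p"
  shows "back_face p q (singular_face (Suc (p + q)) i \<sigma>) = back_face (Suc p) q \<sigma>"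
proof
  fix x
  show "back_face p q (singular_face (Suc (p + q)) i \<sigma>) x = back_face (Suc p) q \<sigma> x"
  proof (cases "x \<in> standard_simplex q")
    case True
    have "simplical_face i (back_inclusion p x) = back_inclusion (Suc p) x"
      using assms by (auto simp: simplical_face_def back_inclusion_def fun_eq_iff)
    with True show ?thesis
      by (simp add: back_face_eq singular_face_def back_inclusion_in_standard_simplex)
  qed (simp add: back_face_eq)
qed

lemma back_face_singular_face_ge:
  assumes "p \<le> i" "i \<le> Suc (p + q)"
  shows "back_face p q (singular_face (Suc (p + q)) i \<sigma>)
       = singular_face (Suc q) (i - p) (back_face p (Suc q) \<sigma>)"
proof
  fix x
  show "back_face p q (singular_face (Suc (p + q)) i \<sigma>) x
      = singular_face (Suc q) (i - p) (back_face p (Suc q) \<sigma>) x"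
  proof (cases "x \<in> standard_simplex q")
    case True
    have "simplical_face (i - p) x \<in> standard_simplex (Suc q)"
      using simplical_face_in_standard_simplex[of "Suc q" "i - p" x] True assms by simp
    moreover have "simplical_face i (back_inclusion p x) = back_inclusion p (simplical_face (i - p) x)"
      using assms by (auto simp: simplical_face_def back_inclusion_def fun_eq_iff)
    ultimately show ?thesis
      using True by (simp add: back_face_eq singular_face_def back_inclusion_in_standard_simplex)
  qed (simp add: back_face_eq singular_face_def)
qed

text \<open>The faces of a (p+q+1)-simplex with index i \<le> p only change the front face and those
  with index i > p only the back face; the two terms for i = p + 1 on the front and i = 0 on
  the back are the same and cancel.\<close>

lemma leibniz_alternating_sum:
  fixes A B :: "nat \<Rightarrow> 'r::comm_ring_1"
  assumes "A (Suc p) = a" "B 0 = b"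
  shows "(\<Sum>i\<le>Suc (p + q). (-1) ^ i * (if i \<le> p then A i * b else a * B (i - p)))
       = (\<Sum>i\<le>Suc p. (-1) ^ i * A i) * b + (-1) ^ p * (a * (\<Sum>i\<le>Suc q. (-1) ^ i * B i))"
proof -
  have split: "{..Suc (p + q)} = {..p} \<union> {Suc p..Suc (p + q)}" by auto
  have "(\<Sum>i\<le>Suc (p + q). (-1) ^ i * (if i \<le> p then A i * b else a * B (i - p)))
      = (\<Sum>i\<le>p. (-1) ^ i * A i) * b + (\<Sum>i\<in>{Suc p..Suc (p + q)}. (-1) ^ i * (a * B (i - p)))"
    unfolding split
    by (subst sum.union_disjoint) (auto simp: sum_distrib_right mult.assoc intro!: sum.cong)
  also have "(\<Sum>i\<in>{Suc p..Suc (p + q)}. (-1) ^ i * (a * B (i - p)))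
           = (\<Sum>j\<in>{0 + Suc p..q + Suc p}. (-1) ^ j * (a * B (j - p)))"
    by (simp add: add.commute)
  also have "\<dots> = (-1) ^ p * (a * (\<Sum>j\<le>q. (-1) ^ Suc j * B (Suc j)))"
    by (simp only: sum.shift_bounds_cl_nat_ivl)
       (simp add: Suc_diff_le sum_distrib_left power_add atLeast0AtMost algebra_simps)
  finally have "(\<Sum>i\<le>Suc (p + q). (-1) ^ i * (if i \<le> p then A i * b else a * B (i - p)))
      = (\<Sum>i\<le>p. (-1) ^ i * A i) * b + (-1) ^ p * (a * (\<Sum>j\<le>q. (-1) ^ Suc j * B (Suc j)))" .
  moreover have "(\<Sum>i\<le>Suc p. (-1) ^ i * A i) = (\<Sum>i\<le>p. (-1) ^ i * A i) - (-1) ^ p * a"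
    using assms by simp
  moreover have "(\<Sum>i\<le>Suc q. (-1) ^ i * B i) = b + (\<Sum>j\<le>q. (-1) ^ Suc j * B (Suc j))"
    by (simp only: sum.atMost_Suc_shift) (simp add: assms)
  ultimately show ?thesis
    using assms by (simp add: algebra_simps)
qed

lemma coboundary_cup_cochain:
  "coboundary (p + q) X (cup_cochain X p q a b)
 = (\<lambda>\<sigma>. cup_cochain X (Suc p) q (coboundary p X a) b \<sigma>
       + (-1) ^ p * cup_cochain X p (Suc q) a (coboundary q X b) \<sigma>)"
proof
  fix \<sigma>
  show "coboundary (p + q) X (cup_cochain X p q a b) \<sigma>
      = cup_cochain X (Suc p) q (coboundary p X a) b \<sigma>
        + (-1) ^ p * cup_cochain X p (Suc q) a (coboundary q X b) \<sigma>"
  proof (cases "singular_simplex (Suc (p + q)) X \<sigma>")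
    case False
    then show ?thesis by (simp add: coboundary_def cup_cochain_def)
  next
    case True
    define A where "A i = a (singular_face (Suc p) i (front_face (Suc p) \<sigma>))" for i
    define B where "B i = b (singular_face (Suc q) i (back_face p (Suc q) \<sigma>))" for i
    have front_simplex: "singular_simplex (Suc p) X (front_face (Suc p) \<sigma>)"
      using singular_simplex_front_face[of "Suc p" q X \<sigma>] True by simp
    have back_simplex: "singular_simplex (Suc q) X (back_face p (Suc q) \<sigma>)"
      using singular_simplex_back_face[of p "Suc q" X \<sigma>] True by simp
    have face: "cup_cochain X p q a b (singular_face (Suc (p + q)) i \<sigma>)
              = (if i \<le> p then A i * b (back_face (Suc p) q \<sigma>) else a (front_face p \<sigma>) * B (i - p))"
      if "i \<le> Suc (p + q)" for i
      using singular_simplex_singular_face[OF True _ that] that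
      by (simp add: cup_cochain_def A_def B_def front_face_singular_face_le front_face_singular_face_gt
          back_face_singular_face_le back_face_singular_face_ge)
    have "coboundary (p + q) X (cup_cochain X p q a b) \<sigma>
        = (\<Sum>i\<le>Suc (p + q). (-1) ^ i
             * (if i \<le> p then A i * b (back_face (Suc p) q \<sigma>) else a (front_face p \<sigma>) * B (i - p)))"
      using True by (simp add: coboundary_def face)
    also have "\<dots> = (\<Sum>i\<le>Suc p. (-1) ^ i * A i) * b (back_face (Suc p) q \<sigma>)
                   + (-1) ^ p * (a (front_face p \<sigma>) * (\<Sum>i\<le>Suc q. (-1) ^ i * B i))"
    proof (rule leibniz_alternating_sum)
      show "A (Suc p) = a (front_face p \<sigma>)"
        using front_face_singular_face_le[of "Suc p" p q \<sigma>] front_face_singular_face_gt[of p "Suc p" q \<sigma>]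
        by (simp add: A_def)
      show "B 0 = b (back_face (Suc p) q \<sigma>)"
        using back_face_singular_face_ge[of p p q \<sigma>] back_face_singular_face_le[of p p q \<sigma>]
        by (simp add: B_def)
    qed
    finally show ?thesis
      using True front_simplex back_simplex by (simp add: cup_cochain_def coboundary_def A_def B_def)
  qed
qed

lemma cup_cochain_zero_left [simp]: "cup_cochain X p q (\<lambda>_. 0) b = (\<lambda>_. 0)"
  by (simp add: cup_cochain_def fun_eq_iff)

lemma cup_cochain_zero_right [simp]: "cup_cochain X p q a (\<lambda>_. 0) = (\<lambda>_. 0)"
  by (simp add: cup_cochain_def fun_eq_iff)

lemma cochain_cup_cochain: "cochain (p + q) X (cup_cochain X p q a b)"
  by (simp add: cochain_def cup_cochain_def)

lemma cup_cochain_diff_left: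
  "cup_cochain X p q (\<lambda>\<sigma>. a \<sigma> - a' \<sigma>) b
 = (\<lambda>\<sigma>. cup_cochain X p q a b \<sigma> - cup_cochain X p q a' b \<sigma>)"
  by (auto simp: cup_cochain_def algebra_simps)

lemma cup_cochain_diff_right:
  "cup_cochain X p q a (\<lambda>\<sigma>. b \<sigma> - b' \<sigma>)
 = (\<lambda>\<sigma>. cup_cochain X p q a b \<sigma> - cup_cochain X p q a b' \<sigma>)"
  by (auto simp: cup_cochain_def algebra_simps)

lemma cocycle_cup_cochain:
  assumes "cocycle p X a" "cocycle q X b"
  shows "cocycle (p + q) X (cup_cochain X p q a b)"
proof -
  have "coboundary p X a = (\<lambda>_. 0)" "coboundary q X b = (\<lambda>_. 0)"
    using assms by (simp_all add: cocycle_def)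
  then show ?thesis
    by (simp add: cocycle_def coboundary_cup_cochain cochain_cup_cochain)
qed

lemma is_coboundary_cup_cochain_left:
  assumes "is_coboundary p X a" "cocycle q X b"
  shows "is_coboundary (p + q) X (cup_cochain X p q a b)"
proof (cases p)
  case 0
  then have "cup_cochain X p q a b = (\<lambda>_. 0)"
    using assms(1) by (auto simp: cup_cochain_def dest!: is_coboundary_0D)
  then show ?thesis by simp
next
  case (Suc m)
  then obtain a' where "a = coboundary m X a'"
    using assms(1) by (metis is_coboundary_SucE)
  then have "cup_cochain X p q a b = coboundary (m + q) X (cup_cochain X m q a' b)"
    using Suc assms(2) by (simp add: coboundary_cup_cochain cocycle_def)
  then show ?thesis
    using Suc is_coboundary_SucI[OF cochain_cup_cochain[of m q X a' b]] by simp
qed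

lemma is_coboundary_cup_cochain_right:
  assumes "cocycle p X a" "is_coboundary q X b"
  shows "is_coboundary (p + q) X (cup_cochain X p q a b)"
proof (cases q)
  case 0
  then have "cup_cochain X p q a b = (\<lambda>_. 0)"
    using assms(2) by (auto simp: cup_cochain_def dest!: is_coboundary_0D)
  then show ?thesis by simp
next
  case (Suc m)
  then obtain b' where "b = coboundary m X b'"
    using assms(2) by (metis is_coboundary_SucE)
  then have "cup_cochain X p q a b = coboundary (p + m) X (\<lambda>\<sigma>. (-1) ^ p * cup_cochain X p m a b' \<sigma>)"
    using Suc assms(1) by (simp add: coboundary_cup_cochain coboundary_cmul cocycle_def)
  moreover have "cochain (p + m) X (\<lambda>\<sigma>. (-1) ^ p * cup_cochain X p m a b' \<sigma>)"
    by (simp add: cochain_def cup_cochain_def)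
  ultimately show ?thesis
    using Suc by (auto intro: is_coboundary_SucI)
qed

section \<open>Graded cocycles and the iterated cup product\<close>

definition graded_cocycle :: "'a topology \<Rightarrow> (nat \<Rightarrow> ('a, 'r::comm_ring_1) cochain) \<Rightarrow> bool" where
  "graded_cocycle X u \<longleftrightarrow> (\<forall>n. cocycle n X (u n))"

definition graded_coboundary :: "'a topology \<Rightarrow> (nat \<Rightarrow> ('a, 'r::comm_ring_1) cochain) \<Rightarrow> bool" where
  "graded_coboundary X u \<longleftrightarrow> (\<forall>n. is_coboundary n X (u n))"

lemma cohomologous_iff_graded_coboundary:
  "cohomologous X u v \<longleftrightarrow> graded_coboundary X (\<lambda>n \<sigma>. u n \<sigma> - v n \<sigma>)"
  by (simp add: cohomologous_def graded_coboundary_def)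

lemma graded_cocycle_gcup:
  assumes "graded_cocycle X u" "graded_cocycle X v"
  shows "graded_cocycle X (gcup X u v)"
  unfolding graded_cocycle_def gcup_def
proof (intro allI cocycle_sum)
  fix n p :: nat
  assume "p \<in> {..n}"
  then show "cocycle n X (cup_cochain X p (n - p) (u p) (v (n - p)))"
    using cocycle_cup_cochain[of p X "u p" "n - p" "v (n - p)"] assms
    by (simp add: graded_cocycle_def)
qed

lemma graded_coboundary_gcup_left:
  assumes "graded_coboundary X a" "graded_cocycle X v"
  shows "graded_coboundary X (gcup X a v)"
  unfolding graded_coboundary_def gcup_def
proof (intro allI is_coboundary_sum)
  fix n p :: nat
  assume "p \<in> {..n}"
  then show "is_coboundary n X (cup_cochain X p (n - p) (a p) (v (n - p)))"
    using is_coboundary_cup_cochain_left[of p X "a p" "n - p" "v (n - p)"] assms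
    by (simp add: graded_cocycle_def graded_coboundary_def)
qed simp

lemma graded_coboundary_gcup_right:
  assumes "graded_cocycle X u" "graded_coboundary X a"
  shows "graded_coboundary X (gcup X u a)"
  unfolding graded_coboundary_def gcup_def
proof (intro allI is_coboundary_sum)
  fix n p :: nat
  assume "p \<in> {..n}"
  then show "is_coboundary n X (cup_cochain X p (n - p) (u p) (a (n - p)))"
    using is_coboundary_cup_cochain_right[of p X "u p" "n - p" "a (n - p)"] assms
    by (simp add: graded_cocycle_def graded_coboundary_def)
qed simp

lemma gcup_diff_left:
  "gcup X (\<lambda>n \<sigma>. a n \<sigma> - a' n \<sigma>) v = (\<lambda>n \<sigma>. gcup X a v n \<sigma> - gcup X a' v n \<sigma>)"
  by (simp add: gcup_def cup_cochain_diff_left cup_cochain_diff_right sum_subtractf)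

lemma gcup_diff_right:
  "gcup X u (\<lambda>n \<sigma>. a n \<sigma> - a' n \<sigma>) = (\<lambda>n \<sigma>. gcup X u a n \<sigma> - gcup X u a' n \<sigma>)"
  by (simp add: gcup_def cup_cochain_diff_left cup_cochain_diff_right sum_subtractf)

lemma cupprod_graded_cocycle:
  "(\<And>j. j \<le> k \<Longrightarrow> graded_cocycle X (u j)) \<Longrightarrow> graded_cocycle X (cupprod X u k)"
  by (induction k) (auto intro: graded_cocycle_gcup)

lemma cupprod_cohomologous:
  assumes "\<And>j. j \<le> k \<Longrightarrow> graded_cocycle X (u j)" "\<And>j. j \<le> k \<Longrightarrow> graded_cocycle X (w j)"
    and "\<And>j. j \<le> k \<Longrightarrow> cohomologous X (u j) (w j)"
  shows "cohomologous X (cupprod X u k) (cupprod X w k)"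
  using assms
proof (induction k)
  case 0
  then show ?case by simp
next
  case (Suc k)
  let ?u = "cupprod X u k" and ?w = "cupprod X w k"
  have "graded_coboundary X (gcup X (\<lambda>n \<sigma>. ?u n \<sigma> - ?w n \<sigma>) (u (Suc k)))"
    using Suc by (intro graded_coboundary_gcup_left) (simp_all add: cohomologous_iff_graded_coboundary)
  moreover have "graded_coboundary X (gcup X ?w (\<lambda>n \<sigma>. u (Suc k) n \<sigma> - w (Suc k) n \<sigma>))"
    using Suc.prems
    by (intro graded_coboundary_gcup_right cupprod_graded_cocycle)
       (simp_all add: cohomologous_iff_graded_coboundary)
  ultimately have "is_coboundary n X (\<lambda>\<sigma>. (gcup X ?u (u (Suc k)) n \<sigma> - gcup X ?w (u (Suc k)) n \<sigma>)
                          + (gcup X ?w (u (Suc k)) n \<sigma> - gcup X ?w (w (Suc k)) n \<sigma>))" for n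
    by (intro is_coboundary_add) (simp_all add: graded_coboundary_def gcup_diff_left gcup_diff_right)
  then show ?case
    by (simp add: cohomologous_iff_graded_coboundary graded_coboundary_def)
qed

definition vanishes_on :: "'a topology \<Rightarrow> 'a set \<Rightarrow> (nat \<Rightarrow> ('a, 'r::comm_ring_1) cochain) \<Rightarrow> bool" where
  "vanishes_on X S u \<longleftrightarrow> (\<forall>n \<sigma>. singular_simplex n (subtopology X S) \<sigma> \<longrightarrow> u n \<sigma> = 0)"

lemma vanishes_on_gcup_left:
  assumes "vanishes_on X S a"
  shows "vanishes_on X S (gcup X a b)"
  unfolding vanishes_on_def gcup_def
proof (intro allI impI sum.neutral ballI)
  fix n p \<sigma>
  assume "singular_simplex n (subtopology X S) \<sigma>" "p \<in> {..n}"
  then have "singular_simplex p (subtopology X S) (front_face p \<sigma>)"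
    using singular_simplex_front_face[of p "n - p"] by simp
  then show "cup_cochain X p (n - p) (a p) (b (n - p)) \<sigma> = 0"
    using assms by (simp add: vanishes_on_def cup_cochain_def)
qed

lemma vanishes_on_gcup_right:
  assumes "vanishes_on X S b"
  shows "vanishes_on X S (gcup X a b)"
  unfolding vanishes_on_def gcup_def
proof (intro allI impI sum.neutral ballI)
  fix n p \<sigma>
  assume "singular_simplex n (subtopology X S) \<sigma>" "p \<in> {..n}"
  then have "singular_simplex (n - p) (subtopology X S) (back_face p (n - p) \<sigma>)"
    using singular_simplex_back_face[of p "n - p"] by simp
  then show "cup_cochain X p (n - p) (a p) (b (n - p)) \<sigma> = 0"
    using assms by (simp add: vanishes_on_def cup_cochain_def)
qed

lemma cupprod_vanishes_on: "j \<le> k \<Longrightarrow> vanishes_on X S (w j) \<Longrightarrow> vanishes_on X S (cupprod X w k)"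
  by (induction k) (auto simp: le_Suc_eq intro: vanishes_on_gcup_left vanishes_on_gcup_right)

section \<open>Cocycles vanishing on small simplices\<close>

definition sd_homotopy :: "nat \<Rightarrow> 'a chain \<Rightarrow> 'a chain" where
  "sd_homotopy = (SOME h. (\<forall>p a b. h p (a - b) = h p a - h p b) \<and>
     (\<forall>p X c. singular_chain p X c \<longrightarrow> singular_chain (Suc p) X (h p c)) \<and>
     (\<forall>p X c. singular_chain p X c \<longrightarrow>
        chain_boundary (Suc p) (h p c) + h (p - Suc 0) (chain_boundary p c) = singular_subdivision p c - c))"

lemma sd_homotopy_spec:
  "(\<forall>p (a :: 'a chain) b. sd_homotopy p (a - b) = sd_homotopy p a - sd_homotopy p b) \<and>
   (\<forall>p X (c :: 'a chain). singular_chain p X c \<longrightarrow> singular_chain (Suc p) X (sd_homotopy p c)) \<and>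
   (\<forall>p X (c :: 'a chain). singular_chain p X c \<longrightarrow>
      chain_boundary (Suc p) (sd_homotopy p c) + sd_homotopy (p - Suc 0) (chain_boundary p c)
        = singular_subdivision p c - c)"
proof -
  obtain h :: "nat \<Rightarrow> 'a chain \<Rightarrow> 'a chain" where
    "\<And>p. h p 0 = 0" "\<And>p a b. h p (a - b) = h p a - h p b"
    "\<And>p X c. singular_chain p X c \<Longrightarrow> singular_chain (Suc p) X (h p c)"
    "\<And>p X c. singular_chain p X c \<Longrightarrow>
       chain_boundary (Suc p) (h p c) + h (p - Suc 0) (chain_boundary p c) = singular_subdivision p c - c"
    using chain_homotopic_singular_subdivision by blast
  then have "\<exists>h :: nat \<Rightarrow> 'a chain \<Rightarrow> 'a chain. (\<forall>p a b. h p (a - b) = h p a - h p b) \<and>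
     (\<forall>p X c. singular_chain p X c \<longrightarrow> singular_chain (Suc p) X (h p c)) \<and>
     (\<forall>p X c. singular_chain p X c \<longrightarrow>
        chain_boundary (Suc p) (h p c) + h (p - Suc 0) (chain_boundary p c) = singular_subdivision p c - c)"
    by blast
  from someI_ex[OF this] show ?thesis
    unfolding sd_homotopy_def .
qed

lemma sd_homotopy_diff: "sd_homotopy p (a - b) = sd_homotopy p a - sd_homotopy p b"
  using sd_homotopy_spec by blast

lemma singular_chain_sd_homotopy:
  "singular_chain p X c \<Longrightarrow> singular_chain (Suc p) X (sd_homotopy p c)"
  using sd_homotopy_spec by blast

lemma chain_boundary_sd_homotopy:
  "singular_chain p X c \<Longrightarrow>
   chain_boundary (Suc p) (sd_homotopy p c) + sd_homotopy (p - Suc 0) (chain_boundary p c)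
     = singular_subdivision p c - c"
  using sd_homotopy_spec by blast

lemma sd_homotopy_0 [simp]: "sd_homotopy p 0 = 0"
  using sd_homotopy_diff[of p 0 0] by simp

definition iter_sd_homotopy :: "nat \<Rightarrow> nat \<Rightarrow> 'a chain \<Rightarrow> 'a chain" where
  "iter_sd_homotopy M p c = (\<Sum>i<M. sd_homotopy p ((singular_subdivision p ^^ i) c))"

lemma singular_chain_iter_subdivision:
  "singular_chain p X c \<Longrightarrow> singular_chain p X ((singular_subdivision p ^^ i) c)"
  by (induction i) (auto intro: singular_chain_singular_subdivision)

lemma chain_boundary_iter_subdivision:
  "singular_chain p X c \<Longrightarrow>
   chain_boundary p ((singular_subdivision p ^^ i) c) = (singular_subdivision (p - Suc 0) ^^ i) (chain_boundary p c)"
proof (induction i)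
  case (Suc i)
  then show ?case
    using singular_chain_iter_subdivision[OF Suc.prems, of i]
    by (simp add: chain_boundary_singular_subdivision)
qed simp

lemma singular_chain_iter_sd_homotopy:
  "singular_chain p X c \<Longrightarrow> singular_chain (Suc p) X (iter_sd_homotopy M p c)"
  unfolding iter_sd_homotopy_def
  by (intro singular_chain_sum singular_chain_sd_homotopy singular_chain_iter_subdivision)

lemma iter_sd_homotopy_diff: "iter_sd_homotopy M p (a - b) = iter_sd_homotopy M p a - iter_sd_homotopy M p b"
  by (simp add: iter_sd_homotopy_def singular_subdivision_power_diff sd_homotopy_diff sum_subtractf)

lemma iter_sd_homotopy_0 [simp]: "iter_sd_homotopy M p 0 = 0"
  using iter_sd_homotopy_diff[of M p 0 0] by simp

lemma iter_sd_homotopy_frag_extend: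
  "iter_sd_homotopy M p c = frag_extend (\<lambda>\<tau>. iter_sd_homotopy M p (frag_of \<tau>)) c"
  using subset_UNIV
  by (induction c rule: frag_induction) (auto simp: frag_extend_diff iter_sd_homotopy_diff)

lemma chain_boundary_iter_sd_homotopy:
  assumes "singular_chain p X c"
  shows "chain_boundary (Suc p) (iter_sd_homotopy M p c) + iter_sd_homotopy M (p - Suc 0) (chain_boundary p c)
       = (singular_subdivision p ^^ M) c - c"
proof (induction M)
  case 0
  then show ?case by (simp add: iter_sd_homotopy_def)
next
  case (Suc M)
  let ?c = "(singular_subdivision p ^^ M) c"
  have "chain_boundary (Suc p) (iter_sd_homotopy (Suc M) p c)
          + iter_sd_homotopy (Suc M) (p - Suc 0) (chain_boundary p c)
      = (chain_boundary (Suc p) (iter_sd_homotopy M p c) + iter_sd_homotopy M (p - Suc 0) (chain_boundary p c))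
        + (chain_boundary (Suc p) (sd_homotopy p ?c) + sd_homotopy (p - Suc 0) (chain_boundary p ?c))"
    using assms
    by (simp add: iter_sd_homotopy_def chain_boundary_iter_subdivision chain_boundary_add algebra_simps)
  also have "\<dots> = (singular_subdivision p ^^ Suc M) c - c"
    using Suc chain_boundary_sd_homotopy[OF singular_chain_iter_subdivision[OF assms, of M]] by simp
  finally show ?case .
qed

lemma iter_sd_homotopy_diff_le:
  assumes "m \<le> M"
  shows "iter_sd_homotopy M p c - iter_sd_homotopy m p c
       = (\<Sum>i\<in>{m..<M}. sd_homotopy p ((singular_subdivision p ^^ i) c))"
  using assms
  by (simp add: iter_sd_homotopy_def lessThan_atLeast0 sum.atLeastLessThan_concat[symmetric, of 0 m M])

lemma frag_extend_fun_diff: "frag_extend (\<lambda>x. f x - g x) c = frag_extend f c - frag_extend g c"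
  using subset_UNIV by (induction c rule: frag_induction) (auto simp: frag_extend_diff algebra_simps)

definition cover_small :: "'a topology \<Rightarrow> 'a set set \<Rightarrow> nat \<Rightarrow> 'a chain \<Rightarrow> bool" where
  "cover_small X \<C> p c \<longleftrightarrow> (\<forall>\<sigma>\<in>Poly_Mapping.keys c. \<exists>U\<in>\<C>. singular_simplex p (subtopology X U) \<sigma>)"

lemma cover_small_0 [simp]: "cover_small X \<C> p 0"
  by (simp add: cover_small_def)

lemma cover_small_diff: "cover_small X \<C> p a \<Longrightarrow> cover_small X \<C> p b \<Longrightarrow> cover_small X \<C> p (a - b)"
  unfolding cover_small_def using keys_diff[of a b] by blast

lemma cover_small_sum: "(\<And>i. i \<in> I \<Longrightarrow> cover_small X \<C> p (c i)) \<Longrightarrow> cover_small X \<C> p (\<Sum>i\<in>I. c i)"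
  unfolding cover_small_def using keys_sum[of c I] by blast

lemma cover_small_frag_extend:
  "(\<And>\<tau>. \<tau> \<in> Poly_Mapping.keys c \<Longrightarrow> cover_small X \<C> p (f \<tau>)) \<Longrightarrow> cover_small X \<C> p (frag_extend f c)"
  unfolding cover_small_def using keys_frag_extend[of f c] by blast

lemma cover_small_induct [consumes 1, case_names zero one diff]:
  assumes "cover_small X \<C> p c" "P 0"
    and "\<And>U \<sigma>. U \<in> \<C> \<Longrightarrow> singular_simplex p (subtopology X U) \<sigma> \<Longrightarrow> P (frag_of \<sigma>)"
    and "\<And>a b. P a \<Longrightarrow> P b \<Longrightarrow> P (a - b)"
  shows "P c"
proof -
  have "Poly_Mapping.keys c \<subseteq> {\<sigma>. \<exists>U\<in>\<C>. singular_simplex p (subtopology X U) \<sigma>}"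
    using assms(1) by (auto simp: cover_small_def)
  then show ?thesis
    by (induction rule: frag_induction) (use assms(2-) in blast)+
qed

lemma cover_small_sd_homotopy:
  assumes "cover_small X \<C> p c"
  shows "cover_small X \<C> (Suc p) (sd_homotopy p c)"
  using assms
proof (induction rule: cover_small_induct)
  case (one U \<sigma>)
  then have "singular_chain (Suc p) (subtopology X U) (sd_homotopy p (frag_of \<sigma>))"
    by (intro singular_chain_sd_homotopy) (simp add: singular_chain_of)
  then show ?case
    using one by (auto simp: cover_small_def singular_chain_def)
next
  case (diff a b)
  then show ?case by (simp add: sd_homotopy_diff cover_small_diff)
qed simp

lemma eventually_cover_small:
  assumes "\<And>U. U \<in> \<C> \<Longrightarrow> openin X U" "topspace X \<subseteq> \<Union>\<C>" "singular_chain p X c"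
  shows "\<exists>N. \<forall>m\<ge>N. cover_small X \<C> p ((singular_subdivision p ^^ m) c)"
proof -
  obtain N where N: "\<And>m \<sigma>. \<lbrakk>N \<le> m; \<sigma> \<in> Poly_Mapping.keys ((singular_subdivision p ^^ m) c)\<rbrakk>
                       \<Longrightarrow> \<exists>U \<in> \<C>. \<sigma> \<in> standard_simplex p \<rightarrow> U"
    using sufficient_iterated_singular_subdivision_exists[OF assms] by metis
  have "cover_small X \<C> p ((singular_subdivision p ^^ m) c)" if "N \<le> m" for m
    unfolding cover_small_def
  proof
    fix \<sigma>
    assume \<sigma>: "\<sigma> \<in> Poly_Mapping.keys ((singular_subdivision p ^^ m) c)"
    then have "singular_simplex p X \<sigma>"
      using singular_chain_iter_subdivision[OF assms(3), of m] by (auto simp: singular_chain_def)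
    then show "\<exists>U\<in>\<C>. singular_simplex p (subtopology X U) \<sigma>"
      using N[OF that \<sigma>] by (auto simp: singular_simplex_subtopology)
  qed
  then show ?thesis by blast
qed

lemma eval_cochain_cover_small:
  assumes "cover_small X \<C> n c" "\<And>\<sigma> U. U \<in> \<C> \<Longrightarrow> singular_simplex n (subtopology X U) \<sigma> \<Longrightarrow> z \<sigma> = 0"
  shows "eval_cochain z c = 0"
  using assms by (intro eval_cochain_eq_0) (auto simp: cover_small_def)

definition subdivision_depth :: "'a topology \<Rightarrow> 'a set set \<Rightarrow> nat \<Rightarrow> ((nat \<Rightarrow> real) \<Rightarrow> 'a) \<Rightarrow> nat" where
  "subdivision_depth X \<C> p \<tau> = (LEAST N. \<forall>m\<ge>N. cover_small X \<C> p ((singular_subdivision p ^^ m) (frag_of \<tau>)))"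

lemma cover_small_subdivision_depth:
  assumes "\<And>U. U \<in> \<C> \<Longrightarrow> openin X U" "topspace X \<subseteq> \<Union>\<C>" "singular_simplex p X \<tau>"
    and "subdivision_depth X \<C> p \<tau> \<le> m"
  shows "cover_small X \<C> p ((singular_subdivision p ^^ m) (frag_of \<tau>))"
proof -
  have "\<exists>N. \<forall>m\<ge>N. cover_small X \<C> p ((singular_subdivision p ^^ m) (frag_of \<tau>))"
    using eventually_cover_small[OF assms(1,2)] assms(3) by (simp add: singular_chain_of)
  from LeastI_ex[OF this] show ?thesis
    using assms(4) unfolding subdivision_depth_def by blast
qed

text \<open>Each simplex is subdivided just often enough to become small. No single number of
  subdivisions works for all simplices at once, as the cochain b in
  is_coboundary_if_vanishes_on_cover would require.\<close>

definition small_homotopy :: "'a topology \<Rightarrow> 'a set set \<Rightarrow> nat \<Rightarrow> 'a chain \<Rightarrow> 'a chain" where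
  "small_homotopy X \<C> p = frag_extend (\<lambda>\<tau>. iter_sd_homotopy (subdivision_depth X \<C> p \<tau>) p (frag_of \<tau>))"

lemma cover_small_iter_sd_homotopy_minus_small_homotopy:
  assumes "\<And>U. U \<in> \<C> \<Longrightarrow> openin X U" "topspace X \<subseteq> \<Union>\<C>" "singular_chain p X d"
    and "\<And>\<tau>. \<tau> \<in> Poly_Mapping.keys d \<Longrightarrow> subdivision_depth X \<C> p \<tau> \<le> M"
  shows "cover_small X \<C> (Suc p) (iter_sd_homotopy M p d - small_homotopy X \<C> p d)"
proof -
  have "iter_sd_homotopy M p d - small_homotopy X \<C> p d
      = frag_extend (\<lambda>\<tau>. iter_sd_homotopy M p (frag_of \<tau>)
                         - iter_sd_homotopy (subdivision_depth X \<C> p \<tau>) p (frag_of \<tau>)) d"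
    unfolding small_homotopy_def iter_sd_homotopy_frag_extend[of M p d] frag_extend_fun_diff ..
  also have "cover_small X \<C> (Suc p) \<dots>"
  proof (rule cover_small_frag_extend)
    fix \<tau>
    assume \<tau>: "\<tau> \<in> Poly_Mapping.keys d"
    then have "singular_simplex p X \<tau>"
      using assms(3) by (auto simp: singular_chain_def)
    then show "cover_small X \<C> (Suc p) (iter_sd_homotopy M p (frag_of \<tau>)
                 - iter_sd_homotopy (subdivision_depth X \<C> p \<tau>) p (frag_of \<tau>))"
      using assms(1,2) assms(4)[OF \<tau>]
      by (auto simp: iter_sd_homotopy_diff_le intro!: cover_small_sum cover_small_sd_homotopy
          cover_small_subdivision_depth)
  qed
  finally show ?thesis .
qed

lemma cocycle_eq_eval_small_homotopy:
  fixes z :: "('a, 'r::comm_ring_1) cochain"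
  assumes \<C>: "\<And>U. U \<in> \<C> \<Longrightarrow> openin X U" "topspace X \<subseteq> \<Union>\<C>"
    and z: "cocycle n X z" "\<And>\<sigma> U. U \<in> \<C> \<Longrightarrow> singular_simplex n (subtopology X U) \<sigma> \<Longrightarrow> z \<sigma> = 0"
    and \<sigma>: "singular_simplex n X \<sigma>"
  shows "z \<sigma> = - eval_cochain z (small_homotopy X \<C> (n - 1) (chain_boundary n (frag_of \<sigma>)))"
proof -
  define c where "c = frag_of \<sigma>"
  define d where "d = chain_boundary n c"
  have c: "singular_chain n X c"
    using \<sigma> by (simp add: c_def singular_chain_of)
  have d: "singular_chain (n - 1) X d"
    using singular_chain_boundary[OF c] by (simp add: d_def)
  obtain N where N: "\<And>m. N \<le> m \<Longrightarrow> cover_small X \<C> n ((singular_subdivision n ^^ m) c)"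
    using eventually_cover_small[OF \<C> c] by blast
  define M where "M = N + (\<Sum>\<tau>\<in>Poly_Mapping.keys d. subdivision_depth X \<C> (n - 1) \<tau>)"
  define R where "R = iter_sd_homotopy M (n - 1) d - small_homotopy X \<C> (n - 1) d"
  have R: "cover_small X \<C> n R"
  proof (cases n)
    case 0
    then show ?thesis by (simp add: R_def d_def small_homotopy_def chain_boundary_def)
  next
    case (Suc q)
    have "subdivision_depth X \<C> q \<tau> \<le> M" if "\<tau> \<in> Poly_Mapping.keys d" for \<tau>
      using member_le_sum[OF that, of "subdivision_depth X \<C> q"] Suc by (simp add: M_def)
    then show ?thesis
      using cover_small_iter_sd_homotopy_minus_small_homotopy[OF \<C>, of q d M] d Suc by (simp add: R_def)
  qed
  have "c = (singular_subdivision n ^^ M) c - chain_boundary (Suc n) (iter_sd_homotopy M n c)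
            - small_homotopy X \<C> (n - 1) d - R"
    using chain_boundary_iter_sd_homotopy[OF c, of M] by (simp add: R_def d_def algebra_simps)
  then have "eval_cochain z c = eval_cochain z ((singular_subdivision n ^^ M) c)
      - eval_cochain z (chain_boundary (Suc n) (iter_sd_homotopy M n c))
      - eval_cochain z (small_homotopy X \<C> (n - 1) d) - eval_cochain z R"
    by (metis eval_cochain_diff)
  also have "eval_cochain z ((singular_subdivision n ^^ M) c) = 0"
    using N[of M] z(2) by (intro eval_cochain_cover_small) (auto simp: M_def)
  also have "eval_cochain z (chain_boundary (Suc n) (iter_sd_homotopy M n c)) = 0"
    by (rule eval_cocycle_boundary[OF z(1) singular_chain_iter_sd_homotopy[OF c]])
  also have "eval_cochain z R = 0"
    using R z(2) by (rule eval_cochain_cover_small)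
  finally show ?thesis
    by (simp add: c_def d_def)
qed

text \<open>The theorem on small simplices (Hatcher, Prop. 2.21), at the level of cochains.\<close>

lemma is_coboundary_if_vanishes_on_cover:
  fixes z :: "('a, 'r::comm_ring_1) cochain"
  assumes \<C>: "\<And>U. U \<in> \<C> \<Longrightarrow> openin X U" "topspace X \<subseteq> \<Union>\<C>"
    and z: "cocycle n X z" "\<And>\<sigma> U. U \<in> \<C> \<Longrightarrow> singular_simplex n (subtopology X U) \<sigma> \<Longrightarrow> z \<sigma> = 0"
  shows "is_coboundary n X z"
proof (cases n)
  case 0
  have "z \<sigma> = 0" if "singular_simplex n X \<sigma>" for \<sigma>
    using cocycle_eq_eval_small_homotopy[OF \<C> z that] 0 by (simp add: small_homotopy_def chain_boundary_def)
  moreover have "z \<sigma> = 0" if "\<not> singular_simplex n X \<sigma>" for \<sigma>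
    using z(1) that by (simp add: cocycle_def cochain_def)
  ultimately have "z = (\<lambda>_. 0)"
    by blast
  then show ?thesis
    by simp
next
  case (Suc m)
  define b where "b \<tau> = (if singular_simplex m X \<tau> then - eval_cochain z (small_homotopy X \<C> m (frag_of \<tau>)) else 0)"
    for \<tau>
  have b: "eval_cochain b c = - eval_cochain z (small_homotopy X \<C> m c)" if "singular_chain m X c" for c
    using that unfolding singular_chain_def
    by (induction rule: frag_induction) (auto simp: b_def small_homotopy_def eval_cochain_diff frag_extend_diff)
  have "z = coboundary m X b"
  proof
    fix \<sigma>
    show "z \<sigma> = coboundary m X b \<sigma>"
    proof (cases "singular_simplex (Suc m) X \<sigma>")
      case True
      then have "singular_chain m X (chain_boundary (Suc m) (frag_of \<sigma>))"
        by (simp add: singular_chain_boundary_alt singular_chain_of)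
      then show ?thesis
        using cocycle_eq_eval_small_homotopy[OF \<C> z] True Suc by (simp add: coboundary_eq_eval_boundary b)
    next
      case False
      then show ?thesis
        using z(1) Suc by (simp add: cocycle_def cochain_def coboundary_def)
    qed
  qed
  moreover have "cochain m X b"
    by (simp add: cochain_def b_def)
  ultimately show ?thesis
    using Suc is_coboundary_SucI by blast
qed

section \<open>Cup products over an open cover\<close>

lemma gpullback_subtopology_id:
  "gpullback (subtopology X V) id u n \<sigma> = (if singular_simplex n (subtopology X V) \<sigma> then u n \<sigma> else 0)"
  by (auto simp: gpullback_def pullback_def singular_simplex_def extensional_restrict)

lemma cohomologous_gzero_gpullback:
  assumes "cohomologous X u gzero" "continuous_map A X \<phi>"
  shows "cohomologous A (gpullback A \<phi> u) gzero"
  using assms is_coboundary_pullback[of _ X "u _" A \<phi>]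
  by (simp add: cohomologous_def gzero_def gpullback_def)

lemma cohomologous_gzero_empty: "cohomologous (subtopology X {}) (gpullback (subtopology X {}) id u) gzero"
proof -
  have "gpullback (subtopology X {}) id u = gzero"
    by (auto simp: fun_eq_iff gzero_def gpullback_def pullback_def singular_simplex_empty)
  then show ?thesis
    by (simp add: cohomologous_def gzero_def)
qed

lemma extend_coboundary_from_subtopology:
  assumes "is_coboundary n (subtopology X V) (\<lambda>\<sigma>. if singular_simplex n (subtopology X V) \<sigma> then c \<sigma> else 0)"
  obtains d where "is_coboundary n X d" "\<And>\<sigma>. singular_simplex n (subtopology X V) \<sigma> \<Longrightarrow> d \<sigma> = c \<sigma>"
proof (cases n)
  case 0
  have "c \<sigma> = 0" if "singular_simplex n (subtopology X V) \<sigma>" for \<sigma>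
    using fun_cong[OF is_coboundary_0D[OF assms[unfolded 0]], of \<sigma>] that 0 by simp
  then show ?thesis
    using that[of "\<lambda>_. 0"] by simp
next
  case (Suc m)
  obtain b where b: "cochain m (subtopology X V) b"
    "(\<lambda>\<sigma>. if singular_simplex n (subtopology X V) \<sigma> then c \<sigma> else 0) = coboundary m (subtopology X V) b"
    using assms Suc by (metis is_coboundary_SucE)
  show ?thesis
  proof (rule that[of "coboundary m X b"])
    show "is_coboundary n X (coboundary m X b)"
      using Suc b(1) by (auto intro: is_coboundary_SucI cochain_subtopology)
    show "coboundary m X b \<sigma> = c \<sigma>" if "singular_simplex n (subtopology X V) \<sigma>" for \<sigma>
      using fun_cong[OF b(2), of \<sigma>] that Suc by (simp add: coboundary_subtopology)
  qed
qed

lemma cohomologous_to_vanishing_on: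
  assumes "graded_cocycle X u" "cohomologous (subtopology X V) (gpullback (subtopology X V) id u) gzero"
  obtains w where "graded_cocycle X w" "cohomologous X u w" "vanishes_on X V w"
proof -
  have "\<exists>d. is_coboundary n X d \<and> (\<forall>\<sigma>. singular_simplex n (subtopology X V) \<sigma> \<longrightarrow> d \<sigma> = u n \<sigma>)" for n
  proof -
    have "is_coboundary n (subtopology X V) (\<lambda>\<sigma>. if singular_simplex n (subtopology X V) \<sigma> then u n \<sigma> else 0)"
      using assms(2) by (simp add: cohomologous_def gpullback_subtopology_id gzero_def)
    then show ?thesis
      by (rule extend_coboundary_from_subtopology) blast
  qed
  then obtain d where d: "\<And>n. is_coboundary n X (d n)"
    "\<And>n \<sigma>. singular_simplex n (subtopology X V) \<sigma> \<Longrightarrow> d n \<sigma> = u n \<sigma>"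
    by metis
  show ?thesis
  proof (rule that[of "\<lambda>n \<sigma>. u n \<sigma> - d n \<sigma>"])
    show "graded_cocycle X (\<lambda>n \<sigma>. u n \<sigma> - d n \<sigma>)"
      using assms(1) d(1) by (simp add: graded_cocycle_def cocycle_diff is_coboundary_imp_cocycle)
    show "cohomologous X u (\<lambda>n \<sigma>. u n \<sigma> - d n \<sigma>)"
      using d(1) by (simp add: cohomologous_def)
    show "vanishes_on X V (\<lambda>n \<sigma>. u n \<sigma> - d n \<sigma>)"
      using d(2) by (simp add: vanishes_on_def)
  qed
qed

lemma cupprod_cohomologous_gzero_if_open_cover:
  assumes V: "\<And>j. j \<le> k \<Longrightarrow> openin X (V j)" "topspace X \<subseteq> (\<Union>j\<le>k. V j)"
    and u: "\<And>j. j \<le> k \<Longrightarrow> graded_cocycle X (u j)"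
    and restr: "\<And>j. j \<le> k \<Longrightarrow> cohomologous (subtopology X (V j)) (gpullback (subtopology X (V j)) id (u j)) gzero"
  shows "cohomologous X (cupprod X u k) gzero"
proof -
  have "\<forall>j. \<exists>w. j \<le> k \<longrightarrow> graded_cocycle X w \<and> cohomologous X (u j) w \<and> vanishes_on X (V j) w"
    using cohomologous_to_vanishing_on[OF u restr] by metis
  then obtain w where w: "\<And>j. j \<le> k \<Longrightarrow> graded_cocycle X (w j)"
    "\<And>j. j \<le> k \<Longrightarrow> cohomologous X (u j) (w j)"
    "\<And>j. j \<le> k \<Longrightarrow> vanishes_on X (V j) (w j)"
    by metis
  have uw: "cohomologous X (cupprod X u k) (cupprod X w k)"
    using u w by (intro cupprod_cohomologous)
  have "is_coboundary n X (cupprod X w k n)" for n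
  proof (rule is_coboundary_if_vanishes_on_cover[where \<C> = "V ` {..k}"])
    show "cocycle n X (cupprod X w k n)"
      using cupprod_graded_cocycle[of k X w] w(1) by (simp add: graded_cocycle_def)
    show "cupprod X w k n \<sigma> = 0" if "U \<in> V ` {..k}" "singular_simplex n (subtopology X U) \<sigma>" for \<sigma> U
      using that cupprod_vanishes_on[OF _ w(3)] by (auto simp: vanishes_on_def)
  qed (use V in auto)
  then have "is_coboundary n X (\<lambda>\<sigma>. (cupprod X u k n \<sigma> - cupprod X w k n \<sigma>) + cupprod X w k n \<sigma>)" for n
    using uw by (intro is_coboundary_add) (simp_all add: cohomologous_def)
  then show ?thesis
    by (simp add: cohomologous_def gzero_def)
qed

section \<open>Homotopic distance and homotopy weight\<close>

definition homotopy_cover ::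
    "'a topology \<Rightarrow> 'b topology \<Rightarrow> ('a \<Rightarrow> 'b) \<Rightarrow> ('a \<Rightarrow> 'b) \<Rightarrow> nat \<Rightarrow> (nat \<Rightarrow> 'a set) \<Rightarrow> bool" where
  "homotopy_cover X Y f g n U \<longleftrightarrow> (\<forall>j\<le>n. openin X (U j)) \<and> (\<Union>j\<le>n. U j) = topspace X
     \<and> (\<forall>j\<le>n. homotopic_with (\<lambda>h. True) (subtopology X (U j)) Y f g)"

lemma hdist_eq:
  "hdist X Y f g = (if \<exists>n U. homotopy_cover X Y f g n U
     then enat (LEAST n. \<exists>U. homotopy_cover X Y f g n U) else \<infinity>)"
  unfolding hdist_def homotopy_cover_def Let_def by (rule refl)

lemma hdist_le_if_homotopy_cover: "homotopy_cover X Y f g n U \<Longrightarrow> hdist X Y f g \<le> enat n"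
  by (auto simp: hdist_eq intro: Least_le)

lemma homotopy_cover_if_hdist_eq:
  assumes "hdist X Y f g = enat n"
  shows "\<exists>U. homotopy_cover X Y f g n U"
proof -
  have ex: "\<exists>n U. homotopy_cover X Y f g n U"
    using assms by (auto simp: hdist_eq split: if_splits)
  then have "(LEAST n. \<exists>U. homotopy_cover X Y f g n U) = n"
    using assms by (simp add: hdist_eq)
  with LeastI_ex[OF ex] show ?thesis
    by simp
qed

lemma hdist_subtopology_UN_le:
  assumes "finite I" "card I \<le> Suc m"
    and U: "\<And>i. i \<in> I \<Longrightarrow> openin X (U i)" "\<And>i. i \<in> I \<Longrightarrow> homotopic_with (\<lambda>h. True) (subtopology X (U i)) Y f g"
  shows "hdist (subtopology X (\<Union>i\<in>I. U i)) Y f g \<le> enat m"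
proof -
  let ?V = "\<Union>i\<in>I. U i"
  obtain e where e: "bij_betw e {0..<card I} I"
    using ex_bij_betw_nat_finite[OF assms(1)] by blast
  define W where "W l = (if l < card I then U (e l) else {})" for l
  have "e l \<in> I" if "l < card I" for l
    using bij_betw_apply[OF e] that by simp
  then have W: "W l \<subseteq> ?V" "openin X (W l)" "homotopic_with (\<lambda>h. True) (subtopology X (W l)) Y f g" for l
    using U by (auto simp: W_def homotopic_on_emptyI)
  have "(\<Union>l\<le>m. W l) = (\<Union>l\<in>{..m} \<inter> {..<card I}. U (e l))"
    by (auto simp: W_def)
  also have "{..m} \<inter> {..<card I} = {0..<card I}"
    using assms(2) by auto
  also have "(\<Union>l\<in>{0..<card I}. U (e l)) = ?V"
    using e by (simp add: bij_betw_def flip: image_image)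
  also have "\<dots> = topspace (subtopology X ?V)"
    using U(1) by (auto dest: openin_subset)
  finally have cover: "(\<Union>l\<le>m. W l) = topspace (subtopology X ?V)" .
  have "openin (subtopology X ?V) (W l)" for l
    using openin_subtopology_Int2[OF W(2), of ?V] by (simp add: Int_absorb1[OF W(1)])
  moreover have "subtopology (subtopology X ?V) (W l) = subtopology X (W l)" for l
    by (simp add: subtopology_subtopology Int_absorb1[OF W(1)])
  ultimately have "homotopy_cover (subtopology X ?V) Y f g m W"
    using cover W(3) by (simp add: homotopy_cover_def)
  then show ?thesis
    by (rule hdist_le_if_homotopy_cover)
qed

lemma hw_pullback_cohomologous_gzero:
  fixes X A :: "'a topology"
  assumes "enat (Suc m) \<le> hw X Y f g u" "continuous_map A X \<phi>" "hdist A Y (f \<circ> \<phi>) (g \<circ> \<phi>) \<le> enat m"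
  shows "cohomologous A (gpullback A \<phi> u) gzero"
proof (cases "cohomologous X u gzero")
  case True
  then show ?thesis
    using assms(2) by (rule cohomologous_gzero_gpullback)
next
  case False
  define P where "P k \<longleftrightarrow> (\<forall>(A :: 'a topology) \<phi>. continuous_map A X \<phi> \<and>
    hdist A Y (f \<circ> \<phi>) (g \<circ> \<phi>) \<le> enat k \<longrightarrow> cohomologous A (gpullback A \<phi> u) gzero)" for k
  have "P m"
  proof (rule ccontr)
    assume "\<not> P m"
    have less: "k < m" if "P k" for k
    proof (rule ccontr)
      assume "\<not> k < m"
      then have "enat m \<le> enat k"
        by simp
      with that have "P m"
        unfolding P_def by (meson order_trans)
      with \<open>\<not> P m\<close> show False ..
    qed
    have "hw X Y f g u = Sup ({0} \<union> {enat (Suc k) | k. P k})"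
      using False by (simp add: hw_def P_def)
    also have "\<dots> \<le> enat m"
    proof (rule Sup_least)
      fix x
      assume "x \<in> {0} \<union> {enat (Suc k) | k. P k}"
      then show "x \<le> enat m"
        using less by (auto simp: Suc_le_eq)
    qed
    finally show False
      using assms(1) by (auto dest: order_trans)
  qed
  then show ?thesis
    using assms(2,3) by (simp add: P_def)
qed

lemma cohomologous_gzero_on_UN_if_card_le_hw:
  assumes "finite I" "enat (card I) \<le> hw X Y f g u"
    and "\<And>i. i \<in> I \<Longrightarrow> openin X (U i)" "\<And>i. i \<in> I \<Longrightarrow> homotopic_with (\<lambda>h. True) (subtopology X (U i)) Y f g"
  shows "cohomologous (subtopology X (\<Union>i\<in>I. U i)) (gpullback (subtopology X (\<Union>i\<in>I. U i)) id u) gzero"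
proof (cases "card I")
  case 0
  then show ?thesis
    using assms(1) cohomologous_gzero_empty by simp
next
  case (Suc m)
  show ?thesis
  proof (rule hw_pullback_cohomologous_gzero)
    show "enat (Suc m) \<le> hw X Y f g u"
      using assms(2) Suc by simp
    show "hdist (subtopology X (\<Union>i\<in>I. U i)) Y (f \<circ> id) (g \<circ> id) \<le> enat m"
      using hdist_subtopology_UN_le[OF assms(1) _ assms(3,4)] Suc by simp
  qed simp
qed

lemma less_sum_enatE:
  fixes x :: "'i \<Rightarrow> enat"
  assumes "finite J" "enat n < (\<Sum>j\<in>J. x j)"
  obtains H where "\<And>j. enat (H j) \<le> x j" "n < (\<Sum>j\<in>J. H j)"
proof -
  define H where "H j = (case x j of enat h \<Rightarrow> h | \<infinity> \<Rightarrow> Suc n)" for j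
  have "enat (H j) \<le> x j" for j
    by (cases "x j") (simp_all add: H_def)
  moreover have "n < (\<Sum>j\<in>J. H j)"
  proof (cases "\<exists>j\<in>J. x j = \<infinity>")
    case True
    then obtain j where "j \<in> J" "x j = \<infinity>" by blast
    then show ?thesis
      using member_le_sum[of j J H] assms(1) by (simp add: H_def)
  next
    case False
    then have "(\<Sum>j\<in>J. x j) = (\<Sum>j\<in>J. enat (H j))"
      by (intro sum.cong) (auto simp: H_def split: enat.split)
    also have "\<dots> = enat (\<Sum>j\<in>J. H j)"
      by (induction J rule: infinite_finite_induct) (simp_all add: zero_enat_def)
    finally show ?thesis
      using assms(2) by simp
  qed
  ultimately show ?thesis
    by (rule that)
qed

definition partial_sum_block :: "(nat \<Rightarrow> nat) \<Rightarrow> nat \<Rightarrow> nat set" where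
  "partial_sum_block H j = {(\<Sum>l<j. H l)..<(\<Sum>l\<le>j. H l)}"

lemma card_partial_sum_block: "card (partial_sum_block H j) = H j"
  by (simp add: partial_sum_block_def flip: lessThan_Suc_atMost)

lemma ex_partial_sum_block: "i < (\<Sum>l\<le>k. H l) \<Longrightarrow> \<exists>j\<le>k. i \<in> partial_sum_block H j"
proof (induction k)
  case (Suc k)
  show ?case
  proof (cases "i < (\<Sum>l\<le>k. H l)")
    case True
    then show ?thesis
      using Suc.IH le_SucI by blast
  next
    case False
    then show ?thesis
      using Suc.prems by (intro exI[of _ "Suc k"]) (simp add: partial_sum_block_def lessThan_Suc_atMost)
  qed
qed (simp add: partial_sum_block_def)

lemma cupprod_cohomologous_gzero_if_hdist_less:
  assumes u: "\<And>j. j \<le> k \<Longrightarrow> graded_cocycle X (u j)"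
    and less: "hdist X Y f g < (\<Sum>j\<le>k. hw X Y f g (u j))"
  shows "cohomologous X (cupprod X u k) gzero"
proof -
  obtain n where n: "hdist X Y f g = enat n"
    using less by (cases "hdist X Y f g") auto
  obtain U where U: "homotopy_cover X Y f g n U"
    using homotopy_cover_if_hdist_eq[OF n] by blast
  obtain H where H: "\<And>j. enat (H j) \<le> hw X Y f g (u j)" "n < (\<Sum>j\<le>k. H j)"
    using less_sum_enatE[where J = "{..k}" and n = n and x = "\<lambda>j. hw X Y f g (u j)"] less n by auto
  define B where "B j = {..n} \<inter> partial_sum_block H j" for j
  show ?thesis
  proof (rule cupprod_cohomologous_gzero_if_open_cover[where V = "\<lambda>j. \<Union>i\<in>B j. U i"])
    show "openin X (\<Union>i\<in>B j. U i)" for j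
      using U by (auto simp: homotopy_cover_def B_def)
    show "topspace X \<subseteq> (\<Union>j\<le>k. \<Union>i\<in>B j. U i)"
    proof
      fix x
      assume "x \<in> topspace X"
      then have "x \<in> (\<Union>i\<le>n. U i)"
        using U by (simp add: homotopy_cover_def)
      then obtain i where "i \<le> n" "x \<in> U i"
        by blast
      moreover obtain j where "j \<le> k" "i \<in> partial_sum_block H j"
        using ex_partial_sum_block[of i H k] H(2) \<open>i \<le> n\<close> by auto
      ultimately show "x \<in> (\<Union>j\<le>k. \<Union>i\<in>B j. U i)"
        by (auto simp: B_def)
    qed
    show "cohomologous (subtopology X (\<Union>i\<in>B j. U i)) (gpullback (subtopology X (\<Union>i\<in>B j. U i)) id (u j)) gzero"
      if "j \<le> k" for j
    proof (rule cohomologous_gzero_on_UN_if_card_le_hw)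
      have "card (B j) \<le> card (partial_sum_block H j)"
        by (rule card_mono) (auto simp: B_def partial_sum_block_def)
      then have "enat (card (B j)) \<le> enat (H j)"
        by (simp add: card_partial_sum_block)
      then show "enat (card (B j)) \<le> hw X Y f g (u j)"
        using H(1)[of j] by (rule order_trans)
    qed (use U in \<open>auto simp: homotopy_cover_def B_def\<close>)
  qed (rule u)
qed

theorem theorem5p10:
  fixes X :: "'a topology" and Y :: "'b topology" and f g :: "'a \<Rightarrow> 'b"
    and u :: "nat \<Rightarrow> nat \<Rightarrow> ('a, 'r::comm_ring_1) cochain" and k :: nat
  assumes "continuous_map X Y f" and "continuous_map X Y g"
    and "\<And>j. j \<le> k \<Longrightarrow> in_J X Y f g (u j)"
    and "\<not> cohomologous X (cupprod X u k) gzero"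
  shows "hdist X Y f g \<ge> (\<Sum>j\<le>k. hw X Y f g (u j))"
proof (rule ccontr)
  assume "\<not> (\<Sum>j\<le>k. hw X Y f g (u j)) \<le> hdist X Y f g"
  moreover have "graded_cocycle X (u j)" if "j \<le> k" for j
    using assms(3)[OF that] by (simp add: in_J_def gcocycle_def graded_cocycle_def)
  ultimately have "cohomologous X (cupprod X u k) gzero"
    by (intro cupprod_cohomologous_gzero_if_hdist_less) (simp_all add: not_le)
  with assms(4) show False ..
qed

end
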